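(* Let $\mathcal E$ be a finite dimensional Hilbert space, $A$ a self-adjoint operator and $B$ a positive contraction on $\mathcal E$, and let $\zeta(z)=\frac{z+1}{z-1}$ for $z\in\mathbb D$. Then $iA+\zeta(z)B-I$ is invertible for every $z\in\mathbb D$, and the function $\psi(z)=(iA+\zeta(z)B+I)(iA+\zeta(z)B-I)^{-1}$ belongs to $\mathcal C$ and satisfies $$0\ge\operatorname{Re}\big[(\psi(z)+I)(\psi(z)-I)^{-1}\big]\ge\operatorname{Re}\big[(z+1)(z-1)^{-1}\big]I\quad\text{for all }z\in\mathbb D.$$
   Context: $\mathbb D$ is the open unit disc. $\mathcal C=\{\psi\in H^\infty_{\mathbb D}(\mathcal B(\mathcal E)):\sup_z\|\psi(z)\|\le1,\ 1\text{ is not an eigenvalue of }\psi(z)\text{ for any }z\in\mathbb D\}$. For an operator $X$, $\operatorname{Re}X=(X+X^* )/2$, and inequalities between self-adjoint operators are in the usual operator order. *)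

theory Defs
  imports "HOL-Complex_Analysis.Complex_Analysis"
begin

text \<open>Operators on the finite dimensional Hilbert space E = complex^'n are complex
  'n x 'n matrices acting by (*v); the norm on complex^'n is the Euclidean (Hilbert) norm.\<close>

definition cinner :: "complex^'n \<Rightarrow> complex^'n \<Rightarrow> complex" where
  "cinner x y = (\<Sum>i\<in>UNIV. x$i * cnj (y$i))"

definition adj :: "complex^'n^'n \<Rightarrow> complex^'n^'n" where
  "adj M = (\<chi> i j. cnj (M$j$i))"

definition mscale :: "complex \<Rightarrow> complex^'n^'n \<Rightarrow> complex^'n^'n" where
  "mscale c M = (\<chi> i j. c * M$i$j)"

definition self_adjoint :: "complex^'n^'n \<Rightarrow> bool" where
  "self_adjoint M \<longleftrightarrow> adj M = M"

definition ReOp :: "complex^'n^'n \<Rightarrow> complex^'n^'n" where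
  "ReOp X = mscale (1/2) (X + adj X)"

definition op_le :: "complex^'n^'n \<Rightarrow> complex^'n^'n \<Rightarrow> bool" where
  "op_le X Y \<longleftrightarrow> (\<forall>x. Im (cinner ((Y - X) *v x) x) = 0 \<and> Re (cinner ((Y - X) *v x) x) \<ge> 0)"

definition opnorm :: "complex^'n^'n \<Rightarrow> real" where
  "opnorm M = onorm (\<lambda>x. M *v x)"

text \<open>The class C: bounded analytic B(E)-valued functions on the unit disc
  (analyticity entrywise, equivalent in finite dimension) with sup norm \<le> 1 and
  such that 1 is not an eigenvalue of psi(z) for any z in the disc.\<close>
definition classC :: "(complex \<Rightarrow> complex^'n^'n) \<Rightarrow> bool" where
  "classC \<psi> \<longleftrightarrow>
     (\<forall>i j. (\<lambda>z. \<psi> z $ i $ j) holomorphic_on ball 0 1) \<and>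
     (\<forall>z\<in>ball 0 1. opnorm (\<psi> z) \<le> 1) \<and>
     (\<forall>z\<in>ball 0 1. \<forall>v. \<psi> z *v v = v \<longrightarrow> v = 0)"

end

theory Submission imports Defs begin

text \<open>For z in the disc, \<zeta>(z) has negative real part, so T = iA + \<zeta>(z)B is dissipative
  (Re \<langle>Tx,x\<rangle> = Re \<zeta>(z) \<langle>Bx,x\<rangle> \<le> 0) and, B being a contraction, Re T \<ge> Re \<zeta>(z) I.
  A dissipative T has no eigenvalue 1, and its Cayley transform \<psi> = (T + I)(T - I)\<inverse>
  satisfies \<psi> v = Ty + y for v = Ty - y, whence \<parallel>\<psi> v\<parallel>^2 - \<parallel>v\<parallel>^2 = 4 Re \<langle>Ty,y\<rangle> \<le> 0.
  The inverse Cayley transform (\<psi> + I)(\<psi> - I)\<inverse> gives back T, so both operator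
  inequalities are statements about T. Holomorphy of \<psi> follows from Cramer's rule.\<close>

no_notation fps_nth (infixl \<open>$\<close> 75)

lemma cinner_add_left: "cinner (x + y) z = cinner x z + cinner y z"
  by (simp add: cinner_def distrib_right sum.distrib)

lemma cinner_diff_left: "cinner (x - y) z = cinner x z - cinner y z"
  by (simp add: cinner_def left_diff_distrib sum_subtractf)

lemma cinner_zero_left [simp]: "cinner 0 x = 0"
  by (simp add: cinner_def)

lemma cinner_commute: "cinner y x = cnj (cinner x y)"
  by (simp add: cinner_def mult.commute)

lemma Re_cinner: "Re (cinner x y) = inner x y"
  by (simp add: cinner_def inner_vec_def inner_complex_def Re_sum)

lemma cinner_self: "cinner x x = of_real ((norm x)\<^sup>2)"
proof -
  have "Im (cinner x x) = 0" by (simp add: cinner_def Im_sum)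
  moreover have "Re (cinner x x) = (norm x)\<^sup>2" by (simp add: Re_cinner power2_norm_eq_inner)
  ultimately show ?thesis by (simp add: complex_eq_iff)
qed

lemma mscale_mult_vector: "mscale c M *v x = c *s (M *v x)"
  by (simp add: mscale_def matrix_vector_mult_def vec_eq_iff sum_distrib_left mult.assoc)

lemma cinner_mscale_left: "cinner (mscale c M *v x) y = c * cinner (M *v x) y"
  by (simp add: mscale_mult_vector cinner_def sum_distrib_left mult.assoc)

lemma cinner_adj_left: "cinner (adj M *v x) y = cinner x (M *v y)"
  unfolding cinner_def adj_def matrix_vector_mult_def
  by (simp add: sum_distrib_left sum_distrib_right mult_ac) (rule sum.swap)

lemma Im_cinner_self_adjoint:
  assumes "self_adjoint A"
  shows "Im (cinner (A *v y) y) = 0"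
proof -
  have "cinner (A *v y) y = cnj (cinner (A *v y) y)"
    using cinner_adj_left[of A y y] cinner_commute[of y "A *v y"] assms
    by (simp add: self_adjoint_def)
  thus ?thesis by (simp add: complex_eq_iff)
qed

lemma cinner_ReOp: "cinner (ReOp X *v x) x = of_real (Re (cinner (X *v x) x))"
proof -
  have "cinner (ReOp X *v x) x = (1/2) * (cinner (X *v x) x + cinner (adj X *v x) x)"
    by (simp add: ReOp_def cinner_mscale_left matrix_vector_mult_add_rdistrib cinner_add_left)
  also have "cinner (adj X *v x) x = cnj (cinner (X *v x) x)"
    by (simp add: cinner_adj_left cinner_commute[of x])
  finally show ?thesis by (simp add: complex_eq_iff)
qed

lemma op_le_iff:
  "op_le X Y \<longleftrightarrow> (\<forall>x. Im (cinner (Y *v x) x) = Im (cinner (X *v x) x)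
                      \<and> Re (cinner (X *v x) x) \<le> Re (cinner (Y *v x) x))"
  by (simp add: op_le_def matrix_vector_mult_diff_rdistrib cinner_diff_left)

lemma Re_cinner_le_norm_square:
  assumes "opnorm B \<le> 1"
  shows "Re (cinner (B *v y) y) \<le> (norm y)\<^sup>2"
proof -
  have "norm (B *v y) \<le> opnorm B * norm y"
    unfolding opnorm_def using onorm[OF matrix_vector_mul_bounded_linear[of B]] by simp
  also have "\<dots> \<le> norm y"
    using mult_right_mono[OF assms norm_ge_zero] by simp
  finally have "norm (B *v y) * norm y \<le> norm y * norm y"
    by (simp add: mult_right_mono)
  moreover have "Re (cinner (B *v y) y) \<le> norm (B *v y) * norm y"
    unfolding Re_cinner by (rule norm_cauchy_schwarz)
  ultimately show ?thesis by (simp add: power2_eq_square)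
qed

definition dissipative :: "complex^'n^'n \<Rightarrow> bool" where
  "dissipative X \<longleftrightarrow> (\<forall>y. Re (cinner (X *v y) y) \<le> 0)"

lemma op_le_ReOp_zero_iff_dissipative: "op_le (ReOp X) 0 \<longleftrightarrow> dissipative X"
  by (simp add: op_le_iff cinner_ReOp dissipative_def)

lemma scalar_le_ReOp_iff:
  "op_le (mscale (complex_of_real r) (mat 1)) (ReOp X)
     \<longleftrightarrow> (\<forall>x. r * (norm x)\<^sup>2 \<le> Re (cinner (X *v x) x))"
  by (simp add: op_le_iff cinner_ReOp cinner_mscale_left cinner_self)

lemma matrix_mult_add_rdistrib: "(B + C) ** (A::'a::semiring_1^_^_) = B ** A + C ** A"
  by (vector matrix_matrix_mult_def sum.distrib[symmetric] field_simps)

lemma mat_add_mat: "mat a + mat b = (mat (a + b) :: 'a::semiring_1^'n^'n)"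
  by (simp add: vec_eq_iff mat_def)

lemma mat_mult_left: "mat c ** M = mscale c M"
proof -
  have "(\<Sum>k\<in>UNIV. (if i = k then c else 0) * M $ k $ j) = c * M $ i $ j" for i j
    by (simp add: if_distrib[where f="\<lambda>a. a * b" for b] sum.delta cong: if_cong)
  thus ?thesis by (simp add: mscale_def matrix_matrix_mult_def mat_def vec_eq_iff)
qed

lemma mat_mult_right: "M ** mat c = mscale c M"
  by (simp add: mscale_def matrix_matrix_mult_def mat_def vec_eq_iff if_distrib sum.delta
      mult.commute cong: if_cong)

lemma mscale_mat: "mscale a (mat b) = mat (a * b)"
  by (simp add: mscale_def mat_def vec_eq_iff)

lemma mscale_mscale: "mscale a (mscale b M) = mscale (a * b) M"
  by (simp add: mscale_def vec_eq_iff mult.assoc)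

lemma mscale_one [simp]: "mscale 1 M = M"
  by (simp add: mscale_def vec_eq_iff)

lemma matrix_inv_eqI:
  fixes X :: "'a::field^'n^'n"
  assumes "X ** Y = mat 1"
  shows "matrix_inv X = Y"
proof -
  have YX: "Y ** X = mat 1" using assms matrix_left_right_inverse by blast
  have inv: "X ** matrix_inv X = mat 1 \<and> matrix_inv X ** X = mat 1"
    unfolding matrix_inv_def by (rule someI[of _ Y]) (simp add: assms YX)
  hence "matrix_inv X = matrix_inv X ** (X ** Y)" by (simp add: assms)
  also have "\<dots> = Y" using inv by (simp add: matrix_mul_assoc)
  finally show ?thesis .
qed

lemma
  fixes X :: "'a::field^'n^'n"
  assumes "invertible X"
  shows matrix_mult_matrix_inv: "X ** matrix_inv X = mat 1"
    and matrix_inv_mult_matrix: "matrix_inv X ** X = mat 1"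
proof -
  obtain Y where "X ** Y = mat 1" using assms invertible_def by blast
  thus "X ** matrix_inv X = mat 1" "matrix_inv X ** X = mat 1"
    using matrix_inv_eqI matrix_left_right_inverse by metis+
qed

lemma matrix_inv_entry:
  fixes M :: "'a::field^'n^'n"
  assumes "invertible M"
  shows "matrix_inv M $ k $ j
           = det (\<chi> a b. if b = k then (if a = j then 1 else 0) else M $ a $ b) / det M"
proof -
  let ?x = "matrix_inv M *v axis j 1"
  have "M *v ?x = axis j 1"
    by (simp add: matrix_vector_mul_assoc matrix_mult_matrix_inv[OF assms])
  moreover have "det M \<noteq> 0" using assms invertible_det_nz by blast
  ultimately have "?x = (\<chi> k. det (\<chi> i b. if b = k then axis j 1 $ i else M $ i $ b) / det M)"
    using cramer by blast
  moreover have "?x $ k = matrix_inv M $ k $ j"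
    by (simp add: matrix_vector_mult_def axis_def if_distrib[where f="\<lambda>a. b * a" for b]
        sum.delta' cong: if_cong)
  ultimately show ?thesis by (simp add: axis_def cong: if_cong)
qed

definition cayley :: "complex^'n^'n \<Rightarrow> complex^'n^'n" where
  "cayley X = (X + mat 1) ** matrix_inv (X - mat 1)"

lemma dissipative_invertible_diff_one:
  assumes "dissipative X"
  shows "invertible (X - mat 1)"
proof -
  have "y = 0" if "(X - mat 1) *v y = 0" for y
  proof -
    from that have "X *v y = y" by (simp add: matrix_vector_mult_diff_rdistrib)
    hence "inner y y \<le> 0"
      using assms unfolding dissipative_def Re_cinner by metis
    thus "y = 0" by (metis inner_gt_zero_iff not_less)
  qed
  thus ?thesis using matrix_left_invertible_ker invertible_left_inverse by metis
qed

lemma add_mat_one_eq: "X + mat 1 = (X - mat 1) + (mat 2 :: complex^'n^'n)"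
proof -
  have "X + mat 1 = (X - mat 1) + (mat 1 + mat 1)" by simp
  thus ?thesis by (simp add: mat_add_mat)
qed

lemma cayley_eq_one_plus_two_inverse:
  assumes "invertible (X - mat 1)"
  shows "cayley X = mat 1 + mat 2 ** matrix_inv (X - mat 1)"
  unfolding cayley_def add_mat_one_eq[of X] matrix_mult_add_rdistrib
  by (simp only: matrix_mult_matrix_inv[OF assms])

lemma cayley_diff_one_inverse:
  assumes "invertible (X - mat 1)"
  shows "(cayley X - mat 1) ** ((X - mat 1) ** mat (1/2)) = mat 1"
proof -
  have "(cayley X - mat 1) ** ((X - mat 1) ** mat (1/2))
          = mat 2 ** ((matrix_inv (X - mat 1) ** (X - mat 1)) ** mat (1/2))"
    by (simp add: cayley_eq_one_plus_two_inverse[OF assms] matrix_mul_assoc)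
  also have "\<dots> = mat 1"
    by (simp add: matrix_inv_mult_matrix[OF assms] mat_mult_left mscale_mat)
  finally show ?thesis .
qed

lemma cayley_cayley:
  assumes "invertible (X - mat 1)"
  shows "cayley (cayley X) = X"
proof -
  have "mat 2 ** ((X - mat 1) ** mat (1/2)) = X - mat 1"
    by (simp add: mat_mult_left mat_mult_right mscale_mscale)
  hence "cayley (cayley X) = mat 1 + (X - mat 1)"
    unfolding cayley_def[of "cayley X"] add_mat_one_eq[of "cayley X"] matrix_mult_add_rdistrib
      matrix_inv_eqI[OF cayley_diff_one_inverse[OF assms]]
    by (simp only: cayley_diff_one_inverse[OF assms])
  thus ?thesis by simp
qed

lemma cayley_no_fixed_vector:
  assumes "invertible (X - mat 1)" and "cayley X *v v = v"
  shows "v = 0"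
proof -
  from assms(2) have "(cayley X - mat 1) *v v = 0"
    by (simp add: matrix_vector_mult_diff_rdistrib)
  hence "((X - mat 1) ** mat (1/2)) *v ((cayley X - mat 1) *v v) = 0" by simp
  thus "v = 0"
    using cayley_diff_one_inverse[OF assms(1)] matrix_left_right_inverse
    by (metis matrix_vector_mul_assoc matrix_vector_mul_lid)
qed

lemma norm_add_le_norm_diff:
  fixes a b :: "'a::real_inner"
  assumes "inner a b \<le> 0"
  shows "norm (a + b) \<le> norm (a - b)"
proof (rule power2_le_imp_le)
  show "(norm (a + b))\<^sup>2 \<le> (norm (a - b))\<^sup>2"
    using assms by (simp add: power2_norm_eq_inner inner_add inner_diff inner_commute)
qed simp

lemma dissipative_cayley_contraction:
  assumes "dissipative X"
  shows "opnorm (cayley X) \<le> 1"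
  unfolding opnorm_def
proof (rule onorm_le)
  fix v
  have inv: "invertible (X - mat 1)" using assms by (rule dissipative_invertible_diff_one)
  define y where "y = matrix_inv (X - mat 1) *v v"
  have "(X - mat 1) *v y = v"
    by (simp add: y_def matrix_vector_mul_assoc matrix_mult_matrix_inv[OF inv])
  hence v: "v = X *v y - y" by (simp add: matrix_vector_mult_diff_rdistrib)
  have "cayley X *v v = (X + mat 1) *v y"
    by (simp add: cayley_def y_def matrix_vector_mul_assoc)
  hence cv: "cayley X *v v = X *v y + y" by (simp add: matrix_vector_mult_add_rdistrib)
  have "inner (X *v y) y \<le> 0" using assms by (simp add: dissipative_def Re_cinner)
  hence "norm (X *v y + y) \<le> norm (X *v y - y)" by (rule norm_add_le_norm_diff)
  thus "norm (cayley X *v v) \<le> 1 * norm v" by (metis cv v mult_1)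
qed

definition holomorphic_matrix_on :: "(complex \<Rightarrow> complex^'n^'m) \<Rightarrow> complex set \<Rightarrow> bool" where
  "holomorphic_matrix_on F S \<longleftrightarrow> (\<forall>i j. (\<lambda>z. F z $ i $ j) holomorphic_on S)"

lemma holomorphic_matrix_on_add_mat:
  "holomorphic_matrix_on F S \<Longrightarrow> holomorphic_matrix_on (\<lambda>z. F z + mat c) S"
  by (simp add: holomorphic_matrix_on_def holomorphic_intros)

lemma holomorphic_matrix_on_diff_mat:
  "holomorphic_matrix_on F S \<Longrightarrow> holomorphic_matrix_on (\<lambda>z. F z - mat c) S"
  by (simp add: holomorphic_matrix_on_def holomorphic_intros)

lemma holomorphic_matrix_on_mult:
  assumes "holomorphic_matrix_on F S" "holomorphic_matrix_on G S"
  shows "holomorphic_matrix_on (\<lambda>z. F z ** G z) S"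
  using assms unfolding holomorphic_matrix_on_def matrix_matrix_mult_def
  by (simp add: holomorphic_intros)

lemma holomorphic_on_det:
  "holomorphic_matrix_on F S \<Longrightarrow> (\<lambda>z. det (F z)) holomorphic_on S"
  unfolding det_def holomorphic_matrix_on_def by (intro holomorphic_intros) auto

lemma holomorphic_matrix_on_matrix_inv:
  fixes F :: "complex \<Rightarrow> complex^'n^'n"
  assumes hol: "holomorphic_matrix_on F S" and inv: "\<And>z. z \<in> S \<Longrightarrow> invertible (F z)"
  shows "holomorphic_matrix_on (\<lambda>z. matrix_inv (F z)) S"
  unfolding holomorphic_matrix_on_def
proof (intro allI)
  fix k j
  let ?G = "\<lambda>z. (\<chi> a b. if b = k then (if a = j then 1 else 0) else F z $ a $ b) :: complex^'n^'n"
  have "(\<lambda>z. ?G z $ a $ b) holomorphic_on S" for a b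
    using hol by (cases "b = k") (auto simp: holomorphic_matrix_on_def)
  hence "holomorphic_matrix_on ?G S" by (simp add: holomorphic_matrix_on_def)
  hence "(\<lambda>z. det (?G z) / det (F z)) holomorphic_on S"
    using inv invertible_det_nz
    by (intro holomorphic_on_divide holomorphic_on_det hol) auto
  thus "(\<lambda>z. matrix_inv (F z) $ k $ j) holomorphic_on S"
    by (rule holomorphic_transform) (simp add: matrix_inv_entry inv)
qed

lemma Re_cinner_iA_plus_scaled:
  assumes "self_adjoint A" and "Im (cinner (B *v y) y) = 0"
  shows "Re (cinner ((mscale \<i> A + mscale c B) *v y) y) = Re c * Re (cinner (B *v y) y)"
  using Im_cinner_self_adjoint[OF assms(1), of y] assms(2)
  by (simp add: matrix_vector_mult_add_rdistrib cinner_add_left cinner_mscale_left)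

lemma Re_add_one_div_diff_one_neg:
  fixes z :: complex
  assumes "norm z < 1"
  shows "Re ((z + 1) / (z - 1)) < 0"
proof -
  have "Re ((z + 1) / (z - 1)) = ((cmod z)\<^sup>2 - 1) / (cmod (z - 1))\<^sup>2"
    unfolding Re_divide' using cmod_power2[of z] by (simp add: algebra_simps power2_eq_square)
  moreover have "(cmod z)\<^sup>2 < 1" using assms by (simp add: abs_square_less_1)
  moreover have "z \<noteq> 1" using assms by auto
  ultimately show ?thesis by (simp add: divide_neg_pos)
qed

theorem proposition4p4:
  fixes A B :: "complex^'n^'n"
  assumes "self_adjoint A"
    and "op_le 0 B" and "opnorm B \<le> 1"
  defines "\<zeta> \<equiv> \<lambda>z::complex. (z + 1) / (z - 1)"
  defines "\<psi> \<equiv> \<lambda>z. (mscale \<i> A + mscale (\<zeta> z) B + mat 1)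
                     ** matrix_inv (mscale \<i> A + mscale (\<zeta> z) B - mat 1)"
  shows "(\<forall>z\<in>ball 0 1. invertible (mscale \<i> A + mscale (\<zeta> z) B - mat 1))
       \<and> classC \<psi>
       \<and> (\<forall>z\<in>ball 0 1.
            op_le (ReOp ((\<psi> z + mat 1) ** matrix_inv (\<psi> z - mat 1))) 0
          \<and> op_le (mscale (complex_of_real (Re ((z + 1) / (z - 1)))) (mat 1))
                  (ReOp ((\<psi> z + mat 1) ** matrix_inv (\<psi> z - mat 1))))"
proof -
  define T where "T z = mscale \<i> A + mscale (\<zeta> z) B" for z
  have \<psi>: "\<psi> = (\<lambda>z. cayley (T z))" by (simp add: \<psi>_def T_def cayley_def fun_eq_iff)
  have B: "Im (cinner (B *v y) y) = 0" "0 \<le> Re (cinner (B *v y) y)" for y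
    using assms(2) by (simp_all add: op_le_def)
  have ReT: "Re (cinner (T z *v y) y) = Re (\<zeta> z) * Re (cinner (B *v y) y)" for z y
    unfolding T_def by (rule Re_cinner_iA_plus_scaled[OF assms(1) B(1)])
  have \<zeta>_neg: "Re (\<zeta> z) < 0" if "z \<in> ball 0 1" for z
    using that Re_add_one_div_diff_one_neg by (simp add: \<zeta>_def)
  have diss: "dissipative (T z)" if "z \<in> ball 0 1" for z
    using \<zeta>_neg[OF that] B(2) by (simp add: dissipative_def ReT mult_nonpos_nonneg)
  have inv: "invertible (T z - mat 1)" if "z \<in> ball 0 1" for z
    using diss[OF that] by (rule dissipative_invertible_diff_one)
  have "holomorphic_matrix_on T (ball 0 1)"
    unfolding holomorphic_matrix_on_def T_def \<zeta>_def mscale_def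
    by (auto intro!: holomorphic_intros)
  hence "holomorphic_matrix_on \<psi> (ball 0 1)"
    unfolding \<psi> cayley_def
    by (intro holomorphic_matrix_on_mult holomorphic_matrix_on_add_mat
        holomorphic_matrix_on_matrix_inv holomorphic_matrix_on_diff_mat inv)
  hence "classC \<psi>"
    using dissipative_cayley_contraction[OF diss] cayley_no_fixed_vector[OF inv]
    by (simp add: classC_def holomorphic_matrix_on_def \<psi>)
  moreover have "op_le (mscale (complex_of_real (Re (\<zeta> z))) (mat 1)) (ReOp (T z))"
    if "z \<in> ball 0 1" for z
    unfolding scalar_le_ReOp_iff ReT
    using \<zeta>_neg[OF that] Re_cinner_le_norm_square[OF assms(3)] by (simp add: mult_left_mono_neg)
  ultimately show ?thesis
    using inv diss cayley_cayley[OF inv]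
    by (simp add: \<psi> \<zeta>_def T_def op_le_ReOp_zero_iff_dissipative cayley_def[symmetric])
qed

end
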